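(* Let $\mathcal{H}$ be a finite family of digraphs, $D$ a digraph and $k$ an integer. A set $X\subseteq V(D)$ is a solution to the instance $(D,k)$ of $\mathcal{H}$-SCC Deletion if and only if it is a solution to the instance $(D,k)$ of the $GPC(\mathcal{H})$-Hitting problem.
   Context: Subgraphs are not necessarily induced; strong components are maximal sets of mutually reachable vertices. A solution to $(D,k)$ of $\mathcal{H}$-SCC Deletion is a set $X\subseteq V(D)$ with $|X|\le k$ such that no strong component of $D-X$ contains a subgraph isomorphic to a graph in $\mathcal{H}$. For a (possibly infinite) family $\mathcal{F}$, a solution to $(D,k)$ of $\mathcal{F}$-Hitting is a set $X\subseteq V(D)$ with $|X|\le k$ such that $D-X$ contains no subgraph isomorphic to a graph in $\mathcal{F}$. For a digraph $H$, $PC(H)$ is the set of strongly connected digraphs of the form $H\cup P_1\cup\dots\cup P_\ell$ (union of vertex and arc sets), where each $P_i$ is a directed path with both end-points in $V(H)$; $GPC(H)$ is the subset of those admitting such a representation with pairwise distinct ordered end-point pairs of the $P_i$. $GPC(\mathcal{H})=\bigcup_{H\in\mathcal{H}}GPC(H)$. *)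

theory Defs
  imports Main
begin

type_synonym 'a digraph = "'a set \<times> ('a \<times> 'a) set"

abbreviation verts :: "'a digraph \<Rightarrow> 'a set" where "verts G \<equiv> fst G"
abbreviation arcs :: "'a digraph \<Rightarrow> ('a \<times> 'a) set" where "arcs G \<equiv> snd G"

definition wf_digraph :: "'a digraph \<Rightarrow> bool" where
  "wf_digraph G \<longleftrightarrow> finite (verts G) \<and> arcs G \<subseteq> verts G \<times> verts G"

definition contains_subgraph :: "'a digraph \<Rightarrow> 'c digraph \<Rightarrow> bool" where
  "contains_subgraph G F \<longleftrightarrow>
     (\<exists>f. inj_on f (verts F) \<and> f ` verts F \<subseteq> verts G \<and>
          (\<forall>(u,v) \<in> arcs F. (f u, f v) \<in> arcs G))"

definition induced :: "'a digraph \<Rightarrow> 'a set \<Rightarrow> 'a digraph" where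
  "induced G S = (verts G \<inter> S, arcs G \<inter> (S \<times> S))"

definition del_verts :: "'a digraph \<Rightarrow> 'a set \<Rightarrow> 'a digraph" where
  "del_verts G X = induced G (verts G - X)"

definition strong_components :: "'a digraph \<Rightarrow> 'a set set" where
  "strong_components G =
     (\<lambda>u. {v \<in> verts G. (u, v) \<in> (arcs G)\<^sup>* \<and> (v, u) \<in> (arcs G)\<^sup>*}) ` verts G"

definition strongly_connected :: "'a digraph \<Rightarrow> bool" where
  "strongly_connected G \<longleftrightarrow> verts G \<noteq> {} \<and>
     (\<forall>u \<in> verts G. \<forall>v \<in> verts G. (u, v) \<in> (arcs G)\<^sup>*)"

definition is_dpath :: "'a list \<Rightarrow> bool" where
  "is_dpath p \<longleftrightarrow> p \<noteq> [] \<and> distinct p"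

definition path_digraph :: "'a list \<Rightarrow> 'a digraph" where
  "path_digraph p = (set p, {(p ! i, p ! Suc i) | i. Suc i < length p})"

definition PC :: "'c digraph \<Rightarrow> 'c digraph set" where
  "PC H = {G. strongly_connected G \<and>
     (\<exists>ps. (\<forall>p \<in> set ps. is_dpath p \<and> hd p \<in> verts H \<and> last p \<in> verts H) \<and>
           G = (verts H \<union> (\<Union>p \<in> set ps. verts (path_digraph p)),
                arcs H \<union> (\<Union>p \<in> set ps. arcs (path_digraph p))))}"

definition GPC :: "'c digraph \<Rightarrow> 'c digraph set" where
  "GPC H = {G. strongly_connected G \<and>
     (\<exists>ps. (\<forall>p \<in> set ps. is_dpath p \<and> hd p \<in> verts H \<and> last p \<in> verts H) \<and>
           distinct (map (\<lambda>p. (hd p, last p)) ps) \<and>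
           G = (verts H \<union> (\<Union>p \<in> set ps. verts (path_digraph p)),
                arcs H \<union> (\<Union>p \<in> set ps. arcs (path_digraph p))))}"

text \<open>To have room for fresh path vertices (members of GPC(H) are considered up to
  isomorphism), H :: 'b digraph is embedded into the vertex type 'b + nat via Inl.\<close>
definition lift :: "'b digraph \<Rightarrow> ('b + nat) digraph" where
  "lift H = (Inl ` verts H, map_prod Inl Inl ` arcs H)"

definition GPC_family :: "'b digraph set \<Rightarrow> ('b + nat) digraph set" where
  "GPC_family \<H> = (\<Union>H \<in> \<H>. GPC (lift H))"

definition SCC_deletion_solution ::
  "'b digraph set \<Rightarrow> 'a digraph \<Rightarrow> int \<Rightarrow> 'a set \<Rightarrow> bool" where
  "SCC_deletion_solution \<H> D k X \<longleftrightarrow> X \<subseteq> verts D \<and> int (card X) \<le> k \<and>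
     (\<forall>C \<in> strong_components (del_verts D X). \<forall>H \<in> \<H>.
        \<not> contains_subgraph (induced (del_verts D X) C) H)"

definition hitting_solution ::
  "'c digraph set \<Rightarrow> 'a digraph \<Rightarrow> int \<Rightarrow> 'a set \<Rightarrow> bool" where
  "hitting_solution \<F> D k X \<longleftrightarrow> X \<subseteq> verts D \<and> int (card X) \<le> k \<and>
     (\<forall>F \<in> \<F>. \<not> contains_subgraph (del_verts D X) F)"

end

theory Submission
  imports Defs "HOL-Library.Transitive_Closure_Table"
begin

text \<open>A member of GPC(H) is strongly connected, so any copy of it in G lies within a single strong
  component, which then contains the copy of H it carries. Conversely, if a strong component
  contains a copy of H, join every ordered pair of distinct vertices of the copy by a directed path
  of G without repeated vertices. The copy of H together with these paths is strongly connected and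
  its paths have pairwise distinct end-point pairs; sending each vertex of the copy to its original
  under \<open>Inl\<close> and all remaining vertices injectively into \<open>Inr\<close> turns it into a member of
  GPC(lift H) that is still a subgraph of G.\<close>

definition subgraph_embedding :: "('c \<Rightarrow> 'a) \<Rightarrow> 'c digraph \<Rightarrow> 'a digraph \<Rightarrow> bool" where
  "subgraph_embedding f F G \<longleftrightarrow> inj_on f (verts F) \<and> f ` verts F \<subseteq> verts G \<and>
     (\<forall>(u, v) \<in> arcs F. (f u, f v) \<in> arcs G)"

definition map_digraph :: "('a \<Rightarrow> 'b) \<Rightarrow> 'a digraph \<Rightarrow> 'b digraph" where
  "map_digraph g G = (g ` verts G, map_prod g g ` arcs G)"

definition attach_paths :: "'a digraph \<Rightarrow> 'a list list \<Rightarrow> 'a digraph" where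
  "attach_paths H ps = (verts H \<union> (\<Union>p \<in> set ps. verts (path_digraph p)),
     arcs H \<union> (\<Union>p \<in> set ps. arcs (path_digraph p)))"

lemma contains_subgraph_iff_embedding:
  "contains_subgraph G F \<longleftrightarrow> (\<exists>f. subgraph_embedding f F G)"
  unfolding contains_subgraph_def subgraph_embedding_def ..

lemma subgraph_embedding_comp:
  assumes "subgraph_embedding f F G" and "subgraph_embedding g G K"
  shows "subgraph_embedding (g \<circ> f) F K"
  using assms unfolding subgraph_embedding_def by (auto simp: comp_inj_on inj_on_subset)

lemma subgraph_embedding_id:
  assumes "verts F \<subseteq> verts G" and "arcs F \<subseteq> arcs G"
  shows "subgraph_embedding id F G"
  using assms unfolding subgraph_embedding_def by auto

lemma subgraph_embedding_Inl_lift: "subgraph_embedding Inl H (lift H)"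
  unfolding subgraph_embedding_def lift_def by auto

lemma subgraph_embedding_inv_into_map_digraph:
  assumes "inj_on g (verts F)" and "arcs F \<subseteq> verts F \<times> verts F"
  shows "subgraph_embedding (inv_into (verts F) g) (map_digraph g F) F"
proof -
  have inv: "inv_into (verts F) g (g a) = a \<and> inv_into (verts F) g (g b) = b"
    if "(a, b) \<in> arcs F" for a b
    using assms that by auto
  show ?thesis
    unfolding subgraph_embedding_def map_digraph_def
    by (auto simp: inj_on_inv_into inv inv_into_f_f[OF assms(1)])
qed

lemma subgraph_embedding_induced_iff:
  assumes "arcs H \<subseteq> verts H \<times> verts H"
  shows "subgraph_embedding f H (induced G C) \<longleftrightarrow> subgraph_embedding f H G \<and> f ` verts H \<subseteq> C"
proof -
  have "f a \<in> C \<and> f b \<in> C" if "f ` verts H \<subseteq> C" and "(a, b) \<in> arcs H" for a b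
    using assms that by auto
  then show ?thesis
    unfolding subgraph_embedding_def induced_def by auto
qed

lemma rtrancl_subgraph_embedding:
  assumes "subgraph_embedding f F G" and "(a, b) \<in> (arcs F)\<^sup>*"
  shows "(f a, f b) \<in> (arcs G)\<^sup>*"
  using assms(2)
proof (induction rule: rtrancl_induct)
  case (step b c)
  then have "(f b, f c) \<in> arcs G"
    using assms(1) unfolding subgraph_embedding_def by blast
  with step.IH show ?case by (rule rtrancl_into_rtrancl)
qed simp

lemma strong_component_reachable:
  assumes "C \<in> strong_components G" and "u \<in> C" and "v \<in> C"
  shows "(u, v) \<in> (arcs G)\<^sup>*"
proof -
  obtain x where "C = {w \<in> verts G. (x, w) \<in> (arcs G)\<^sup>* \<and> (w, x) \<in> (arcs G)\<^sup>*}"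
    using assms(1) unfolding strong_components_def by blast
  then have "(u, x) \<in> (arcs G)\<^sup>*" and "(x, v) \<in> (arcs G)\<^sup>*"
    using assms(2,3) by simp_all
  then show ?thesis by (rule rtrancl_trans)
qed

lemma subset_strong_component:
  assumes "S \<subseteq> verts G" and "x \<in> S" and "\<forall>a \<in> S. \<forall>b \<in> S. (a, b) \<in> (arcs G)\<^sup>*"
  shows "\<exists>C \<in> strong_components G. S \<subseteq> C"
proof
  let ?C = "{w \<in> verts G. (x, w) \<in> (arcs G)\<^sup>* \<and> (w, x) \<in> (arcs G)\<^sup>*}"
  show "?C \<in> strong_components G"
    unfolding strong_components_def using assms(1,2) by (intro imageI) blast
  show "S \<subseteq> ?C"
    using assms by blast
qed

lemma strongly_connected_image_in_strong_component:
  assumes "subgraph_embedding g F G" and "strongly_connected F"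
  shows "\<exists>C \<in> strong_components G. g ` verts F \<subseteq> C"
proof -
  obtain x where x: "x \<in> verts F"
    using assms(2) unfolding strongly_connected_def by blast
  show ?thesis
  proof (rule subset_strong_component)
    show "g ` verts F \<subseteq> verts G"
      using assms(1) unfolding subgraph_embedding_def by blast
    show "g x \<in> g ` verts F"
      using x by (rule imageI)
    show "\<forall>a \<in> g ` verts F. \<forall>b \<in> g ` verts F. (a, b) \<in> (arcs G)\<^sup>*"
      using assms(2) rtrancl_subgraph_embedding[OF assms(1)]
      unfolding strongly_connected_def by blast
  qed
qed

lemma path_digraph_conv_zip: "path_digraph p = (set p, set (zip p (tl p)))"
  unfolding path_digraph_def by (auto simp: set_zip nth_tl)

lemma arcs_path_digraph_subset:
  "arcs (path_digraph p) \<subseteq> verts (path_digraph p) \<times> verts (path_digraph p)"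
  unfolding path_digraph_def by auto

lemma path_digraph_reach:
  assumes "z \<in> set p"
  shows "(hd p, z) \<in> (arcs (path_digraph p))\<^sup>* \<and> (z, last p) \<in> (arcs (path_digraph p))\<^sup>*"
  using assms
proof (induction p arbitrary: z rule: induct_list012)
  case (3 x y xs)
  let ?A = "arcs (path_digraph (x # y # xs))"
  have xy: "(x, y) \<in> ?A" and mono: "(arcs (path_digraph (y # xs)))\<^sup>* \<subseteq> ?A\<^sup>*"
    by (auto simp: path_digraph_conv_zip intro!: rtrancl_mono)
  have "(y, last (y # xs)) \<in> ?A\<^sup>*"
    using "3.IH"(2)[of y] mono by auto
  then have x_last: "(x, last (x # y # xs)) \<in> ?A\<^sup>*"
    using xy by (simp add: converse_rtrancl_into_rtrancl)
  show ?case
  proof (cases "z = x")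
    case False
    then have "(y, z) \<in> ?A\<^sup>* \<and> (z, last (y # xs)) \<in> ?A\<^sup>*"
      using "3.IH"(2)[of z] "3.prems" mono by auto
    then show ?thesis
      using xy by (simp add: converse_rtrancl_into_rtrancl)
  qed (use x_last in simp)
qed auto

lemma rtrancl_path_path_digraph:
  assumes "rtrancl_path (\<lambda>a b. (a, b) \<in> E) x xs y"
  shows "arcs (path_digraph (x # xs)) \<subseteq> E \<and> last (x # xs) = y"
  using assms by (induction rule: rtrancl_path.induct) (auto simp: path_digraph_conv_zip)

lemma rtrancl_imp_dpath:
  assumes "(x, y) \<in> E\<^sup>*"
  shows "\<exists>p. is_dpath p \<and> hd p = x \<and> last p = y \<and> arcs (path_digraph p) \<subseteq> E"
proof -
  have "(\<lambda>a b. (a, b) \<in> E)\<^sup>*\<^sup>* x y"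
    using assms by (simp add: rtranclp_rtrancl_eq)
  then obtain xs where "rtrancl_path (\<lambda>a b. (a, b) \<in> E) x xs y"
    by (meson rtranclp_eq_rtrancl_path)
  then obtain xs' where path: "rtrancl_path (\<lambda>a b. (a, b) \<in> E) x xs' y"
    and "distinct (x # xs')"
    by (rule rtrancl_path_distinct)
  with rtrancl_path_path_digraph[OF path]
  have "is_dpath (x # xs') \<and> hd (x # xs') = x \<and> last (x # xs') = y
      \<and> arcs (path_digraph (x # xs')) \<subseteq> E"
    unfolding is_dpath_def by simp
  then show ?thesis ..
qed

lemma connecting_dpaths_exist:
  assumes "finite V" and "\<forall>u \<in> V. \<forall>v \<in> V. (u, v) \<in> E\<^sup>*"
  shows "\<exists>ps. (\<forall>p \<in> set ps. is_dpath p \<and> hd p \<in> V \<and> last p \<in> V \<and> arcs (path_digraph p) \<subseteq> E)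
    \<and> distinct (map (\<lambda>p. (hd p, last p)) ps)
    \<and> (\<forall>u \<in> V. \<forall>v \<in> V. u \<noteq> v \<longrightarrow> (\<exists>p \<in> set ps. hd p = u \<and> last p = v))"
proof -
  define Q where "Q u v = (SOME p. is_dpath p \<and> hd p = u \<and> last p = v \<and> arcs (path_digraph p) \<subseteq> E)"
    for u v
  have Q: "is_dpath (Q u v) \<and> hd (Q u v) = u \<and> last (Q u v) = v \<and> arcs (path_digraph (Q u v)) \<subseteq> E"
    if "u \<in> V" and "v \<in> V" for u v
    unfolding Q_def by (rule someI_ex, rule rtrancl_imp_dpath) (use assms(2) that in blast)
  have "finite (V \<times> V)"
    using assms(1) by simp
  then obtain pairs where pairs: "set pairs = V \<times> V - Id" and "distinct pairs"
    using finite_distinct_list[of "V \<times> V - Id"] by blast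
  define ps where "ps = map (case_prod Q) pairs"
  have "map (\<lambda>p. (hd p, last p)) ps = pairs"
    unfolding ps_def map_map
  proof (rule map_idI, clarify)
    fix u v assume "(u, v) \<in> set pairs"
    then show "((\<lambda>p. (hd p, last p)) \<circ> case_prod Q) (u, v) = (u, v)"
      using pairs Q by simp
  qed
  then have "distinct (map (\<lambda>p. (hd p, last p)) ps)"
    using \<open>distinct pairs\<close> by simp
  moreover have "\<forall>p \<in> set ps. is_dpath p \<and> hd p \<in> V \<and> last p \<in> V \<and> arcs (path_digraph p) \<subseteq> E"
    unfolding ps_def using pairs Q by auto
  moreover have "\<exists>p \<in> set ps. hd p = u \<and> last p = v" if "u \<in> V" "v \<in> V" "u \<noteq> v" for u v
  proof
    show "Q u v \<in> set ps"
      unfolding ps_def using pairs that by (auto intro: rev_image_eqI)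
    show "hd (Q u v) = u \<and> last (Q u v) = v"
      using Q that by blast
  qed
  ultimately show ?thesis by blast
qed

lemma map_path_digraph: "map_digraph g (path_digraph p) = path_digraph (map g p)"
  by (simp add: map_digraph_def path_digraph_conv_zip zip_map_map map_prod_def flip: map_tl)

lemma map_attach_paths:
  "map_digraph g (attach_paths H ps) = attach_paths (map_digraph g H) (map (map g) ps)"
proof -
  have "verts (path_digraph (map g p)) = g ` verts (path_digraph p)"
    and "arcs (path_digraph (map g p)) = map_prod g g ` arcs (path_digraph p)" for p
    by (simp_all flip: map_path_digraph add: map_digraph_def)
  then show ?thesis
    unfolding attach_paths_def map_digraph_def by (simp add: image_Un image_UN)
qed

lemma arcs_attach_paths_subset:
  assumes "arcs H \<subseteq> verts H \<times> verts H"
  shows "arcs (attach_paths H ps) \<subseteq> verts (attach_paths H ps) \<times> verts (attach_paths H ps)"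
proof
  fix e assume "e \<in> arcs (attach_paths H ps)"
  then consider "e \<in> arcs H" | p where "p \<in> set ps" and "e \<in> arcs (path_digraph p)"
    unfolding attach_paths_def by auto
  then show "e \<in> verts (attach_paths H ps) \<times> verts (attach_paths H ps)"
  proof cases
    case 1
    then show ?thesis
      using assms unfolding attach_paths_def by auto
  next
    case 2
    then show ?thesis
      using arcs_path_digraph_subset[of p] unfolding attach_paths_def by auto
  qed
qed

lemma strongly_connected_attach_paths:
  assumes "verts H \<noteq> {}"
    and ends: "\<forall>p \<in> set ps. p \<noteq> [] \<and> hd p \<in> verts H \<and> last p \<in> verts H"
    and connecting: "\<forall>u \<in> verts H. \<forall>v \<in> verts H. u \<noteq> v \<longrightarrow> (\<exists>p \<in> set ps. hd p = u \<and> last p = v)"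
  shows "strongly_connected (attach_paths H ps)"
proof -
  let ?E = "arcs (attach_paths H ps)"
  have along_path: "(hd p, z) \<in> ?E\<^sup>* \<and> (z, last p) \<in> ?E\<^sup>*" if "p \<in> set ps" and "z \<in> set p" for p z
  proof -
    have "(arcs (path_digraph p))\<^sup>* \<subseteq> ?E\<^sup>*"
      using that(1) unfolding attach_paths_def by (intro rtrancl_mono) auto
    then show ?thesis
      using path_digraph_reach[OF that(2)] by blast
  qed
  have between_verts: "(u, v) \<in> ?E\<^sup>*" if uv: "u \<in> verts H" "v \<in> verts H" for u v
  proof (cases "u = v")
    case False
    then obtain p where "p \<in> set ps" and "hd p = u" and "last p = v"
      using connecting uv by blast
    then show ?thesis
      using along_path[of p "last p"] ends by auto
  qed simp
  have to_and_from_verts: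
    "\<exists>u \<in> verts H. \<exists>v \<in> verts H. (x, u) \<in> ?E\<^sup>* \<and> (v, x) \<in> ?E\<^sup>*"
    if x: "x \<in> verts (attach_paths H ps)" for x
  proof (cases "x \<in> verts H")
    case False
    then obtain p where "p \<in> set ps" and "x \<in> set p"
      using x unfolding attach_paths_def path_digraph_def by auto
    then show ?thesis
      using along_path ends by blast
  qed blast
  show ?thesis
    unfolding strongly_connected_def
  proof (intro conjI ballI)
    show "verts (attach_paths H ps) \<noteq> {}"
      using assms(1) unfolding attach_paths_def by simp
    fix x y
    assume "x \<in> verts (attach_paths H ps)" and "y \<in> verts (attach_paths H ps)"
    then obtain u v where "u \<in> verts H" "v \<in> verts H" "(x, u) \<in> ?E\<^sup>*" "(v, y) \<in> ?E\<^sup>*"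
      using to_and_from_verts by meson
    then show "(x, y) \<in> ?E\<^sup>*"
      using between_verts by (meson rtrancl_trans)
  qed
qed

lemma mem_GPC_iff:
  "G \<in> GPC H \<longleftrightarrow> strongly_connected G \<and>
     (\<exists>ps. (\<forall>p \<in> set ps. is_dpath p \<and> hd p \<in> verts H \<and> last p \<in> verts H) \<and>
       distinct (map (\<lambda>p. (hd p, last p)) ps) \<and> G = attach_paths H ps)"
  unfolding GPC_def attach_paths_def by simp

lemma GPC_D:
  assumes "G \<in> GPC H"
  shows "strongly_connected G" and "subgraph_embedding id H G"
  using assms unfolding mem_GPC_iff attach_paths_def
  by (auto intro!: subgraph_embedding_id)

lemma attach_connecting_dpaths_in_GPC:
  assumes "verts H \<noteq> {}"
    and "\<forall>p \<in> set ps. is_dpath p \<and> hd p \<in> verts H \<and> last p \<in> verts H"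
    and "distinct (map (\<lambda>p. (hd p, last p)) ps)"
    and "\<forall>u \<in> verts H. \<forall>v \<in> verts H. u \<noteq> v \<longrightarrow> (\<exists>p \<in> set ps. hd p = u \<and> last p = v)"
  shows "attach_paths H ps \<in> GPC H"
proof -
  have "strongly_connected (attach_paths H ps)"
    using assms(2) unfolding is_dpath_def
    by (intro strongly_connected_attach_paths assms(1,4)) blast
  then show ?thesis
    unfolding mem_GPC_iff using assms(2,3) by blast
qed

lemma strongly_connected_map_digraph:
  assumes "inj_on g (verts G)" and "strongly_connected G"
  shows "strongly_connected (map_digraph g G)"
proof -
  have emb: "subgraph_embedding g G (map_digraph g G)"
    using assms(1) unfolding subgraph_embedding_def map_digraph_def by auto
  have "(g a, g b) \<in> (arcs (map_digraph g G))\<^sup>*" if "a \<in> verts G" and "b \<in> verts G" for a b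
    using assms(2) that unfolding strongly_connected_def
    by (intro rtrancl_subgraph_embedding[OF emb]) blast
  then show ?thesis
    using assms(2) unfolding strongly_connected_def map_digraph_def by auto
qed

lemma GPC_map_digraph:
  assumes inj: "inj_on g (verts G)" and "G \<in> GPC H"
  shows "map_digraph g G \<in> GPC (map_digraph g H)"
proof -
  obtain ps where sc: "strongly_connected G"
    and paths: "\<forall>p \<in> set ps. is_dpath p \<and> hd p \<in> verts H \<and> last p \<in> verts H"
    and ends: "distinct (map (\<lambda>p. (hd p, last p)) ps)"
    and G: "G = attach_paths H ps"
    using assms(2) unfolding mem_GPC_iff by blast
  have sub: "set p \<subseteq> verts G" if "p \<in> set ps" for p
    using that unfolding G attach_paths_def path_digraph_def by auto
  have HG: "verts H \<subseteq> verts G"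
    unfolding G attach_paths_def by auto
  then have "\<forall>p \<in> set (map (map g) ps).
      is_dpath p \<and> hd p \<in> verts (map_digraph g H) \<and> last p \<in> verts (map_digraph g H)"
    using paths sub inj_on_subset[OF inj]
    by (auto simp: is_dpath_def distinct_map hd_map last_map map_digraph_def)
  moreover have "distinct (map (\<lambda>p. (hd p, last p)) (map (map g) ps))"
  proof -
    have "set (map (\<lambda>p. (hd p, last p)) ps) \<subseteq> verts G \<times> verts G"
      using paths HG by (auto simp: is_dpath_def)
    then have "inj_on (map_prod g g) (set (map (\<lambda>p. (hd p, last p)) ps))"
      by (rule inj_on_subset[OF map_prod_inj_on[OF inj inj]])
    then have "distinct (map (map_prod g g) (map (\<lambda>p. (hd p, last p)) ps))"
      by (simp only: distinct_map[of "map_prod g g"] ends)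
    moreover have "map (map_prod g g) (map (\<lambda>p. (hd p, last p)) ps) = map (\<lambda>p. (hd p, last p)) (map (map g) ps)"
      using paths by (auto simp: is_dpath_def hd_map last_map)
    ultimately show ?thesis
      by metis
  qed
  moreover have "strongly_connected (map_digraph g G)"
    using inj sc by (rule strongly_connected_map_digraph)
  ultimately show ?thesis
    unfolding mem_GPC_iff G map_attach_paths by blast
qed

lemma relabelling_into_Inl:
  fixes f :: "'b \<Rightarrow> 'a"
  assumes "inj_on f A" and "finite W"
  obtains g :: "'a \<Rightarrow> 'b + nat" where "inj_on g W" and "\<And>u. u \<in> A \<Longrightarrow> g (f u) = Inl u"
proof -
  obtain h :: "'a \<Rightarrow> nat" where h: "inj_on h W"
    using finite_imp_inj_to_nat_seg[OF assms(2)] by blast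
  define g where "g a = (if a \<in> f ` A then Inl (inv_into A f a) else Inr (h a))" for a
  have "g (f u) = Inl u" if "u \<in> A" for u
    unfolding g_def using assms(1) that by simp
  moreover have "inj_on g W"
  proof (rule inj_onI)
    fix a b assume "a \<in> W" "b \<in> W" "g a = g b"
    then show "a = b"
      using h unfolding g_def by (auto split: if_splits dest: inj_onD intro: inv_into_injective)
  qed
  ultimately show thesis
    using that by blast
qed

lemma strong_component_subgraph_if_GPC_subgraph:
  assumes "arcs H \<subseteq> verts H \<times> verts H" and "F \<in> GPC (lift H)" and "contains_subgraph G F"
  shows "\<exists>C \<in> strong_components G. contains_subgraph (induced G C) H"
proof -
  obtain g where g: "subgraph_embedding g F G"
    using assms(3) unfolding contains_subgraph_iff_embedding by blast
  obtain C where C: "C \<in> strong_components G" "g ` verts F \<subseteq> C"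
    using strongly_connected_image_in_strong_component[OF g GPC_D(1)[OF assms(2)]] by blast
  have HF: "subgraph_embedding (id \<circ> Inl) H F"
    using subgraph_embedding_Inl_lift GPC_D(2)[OF assms(2)] by (rule subgraph_embedding_comp)
  then have "subgraph_embedding (g \<circ> (id \<circ> Inl)) H G"
    using g by (rule subgraph_embedding_comp)
  moreover have "(g \<circ> (id \<circ> Inl)) ` verts H \<subseteq> C"
    using HF C(2) unfolding subgraph_embedding_def by auto
  ultimately have "contains_subgraph (induced G C) H"
    unfolding contains_subgraph_iff_embedding subgraph_embedding_induced_iff[OF assms(1)] by blast
  with C(1) show ?thesis by blast
qed

lemma GPC_subgraph_if_reachable_embedding:
  fixes H :: "'b digraph" and G :: "'a digraph"
  assumes "wf_digraph H" and "verts H \<noteq> {}" and wfG: "arcs G \<subseteq> verts G \<times> verts G"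
    and f: "subgraph_embedding f H G"
    and reach: "\<forall>u \<in> verts H. \<forall>v \<in> verts H. (f u, f v) \<in> (arcs G)\<^sup>*"
  shows "\<exists>F \<in> GPC (lift H). contains_subgraph G F"
proof -
  have finH: "finite (verts H)" and wfH: "arcs H \<subseteq> verts H \<times> verts H"
    using assms(1) unfolding wf_digraph_def by auto
  obtain qs where
    paths: "\<forall>q \<in> set qs. is_dpath q \<and> hd q \<in> f ` verts H \<and> last q \<in> f ` verts H
      \<and> arcs (path_digraph q) \<subseteq> arcs G"
    and ends: "distinct (map (\<lambda>q. (hd q, last q)) qs)"
    and connecting: "\<forall>a \<in> f ` verts H. \<forall>b \<in> f ` verts H. a \<noteq> b \<longrightarrow>
      (\<exists>q \<in> set qs. hd q = a \<and> last q = b)"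
    using connecting_dpaths_exist[of "f ` verts H" "arcs G"] finH reach by auto
  define F0 where "F0 = attach_paths (map_digraph f H) qs"
  have F0_GPC: "F0 \<in> GPC (map_digraph f H)"
    unfolding F0_def using assms(2) paths ends connecting
    by (intro attach_connecting_dpaths_in_GPC) (auto simp: map_digraph_def)
  have F0_G: "subgraph_embedding id F0 G"
  proof (rule subgraph_embedding_id)
    have "z \<in> verts G" if "q \<in> set qs" and "z \<in> set q" for q z
    proof -
      have "(hd q, z) \<in> (arcs G)\<^sup>*"
        using path_digraph_reach[OF that(2)] rtrancl_mono paths that(1) by blast
      moreover have "hd q \<in> verts G"
        using paths f that(1) unfolding subgraph_embedding_def by blast
      ultimately show ?thesis
        using wfG by (induction rule: rtrancl_induct) auto
    qed
    then show "verts F0 \<subseteq> verts G"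
      using f unfolding F0_def attach_paths_def map_digraph_def subgraph_embedding_def path_digraph_def
      by auto
    show "arcs F0 \<subseteq> arcs G"
      using f paths unfolding F0_def attach_paths_def map_digraph_def subgraph_embedding_def
      by auto
  qed
  have wf_F0: "arcs F0 \<subseteq> verts F0 \<times> verts F0"
    unfolding F0_def using wfH
    by (intro arcs_attach_paths_subset) (auto simp: map_digraph_def)
  have "finite (verts F0)"
    using finH unfolding F0_def attach_paths_def map_digraph_def path_digraph_def by simp
  then obtain g :: "'a \<Rightarrow> 'b + nat"
    where g: "inj_on g (verts F0)" and gf: "\<And>u. u \<in> verts H \<Longrightarrow> g (f u) = Inl u"
    using relabelling_into_Inl f unfolding subgraph_embedding_def by metis
  have "map_digraph g (map_digraph f H) = lift H"
  proof -
    have "map_prod g g (map_prod f f e) = map_prod Inl Inl e" if "e \<in> arcs H" for e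
      using that wfH gf by auto
    then show ?thesis
      unfolding map_digraph_def lift_def using gf by (simp add: image_image cong: image_cong)
  qed
  then have "map_digraph g F0 \<in> GPC (lift H)"
    using GPC_map_digraph[OF g F0_GPC] by simp
  moreover have "contains_subgraph G (map_digraph g F0)"
    unfolding contains_subgraph_iff_embedding
    using subgraph_embedding_comp[OF subgraph_embedding_inv_into_map_digraph[OF g wf_F0] F0_G]
    by blast
  ultimately show ?thesis by blast
qed

lemma strong_component_subgraph_iff_GPC_subgraph:
  assumes "wf_digraph H" and "verts H \<noteq> {}" and "arcs G \<subseteq> verts G \<times> verts G"
  shows "(\<exists>C \<in> strong_components G. contains_subgraph (induced G C) H) \<longleftrightarrow>
    (\<exists>F \<in> GPC (lift H). contains_subgraph G F)"
proof -
  have wfH: "arcs H \<subseteq> verts H \<times> verts H"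
    using assms(1) unfolding wf_digraph_def by blast
  show ?thesis
  proof
    assume "\<exists>C \<in> strong_components G. contains_subgraph (induced G C) H"
    then obtain C f where C: "C \<in> strong_components G" and f: "subgraph_embedding f H G"
      and fC: "f ` verts H \<subseteq> C"
      unfolding contains_subgraph_iff_embedding subgraph_embedding_induced_iff[OF wfH] by blast
    have "\<forall>u \<in> verts H. \<forall>v \<in> verts H. (f u, f v) \<in> (arcs G)\<^sup>*"
      using strong_component_reachable[OF C] fC by blast
    then show "\<exists>F \<in> GPC (lift H). contains_subgraph G F"
      by (rule GPC_subgraph_if_reachable_embedding[OF assms f])
  next
    assume "\<exists>F \<in> GPC (lift H). contains_subgraph G F"
    then show "\<exists>C \<in> strong_components G. contains_subgraph (induced G C) H"
      using strong_component_subgraph_if_GPC_subgraph[OF wfH] by blast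
  qed
qed

theorem lemma20:
  fixes \<H> :: "'b digraph set" and D :: "'a digraph" and k :: int and X :: "'a set"
  assumes "finite \<H>"
    and "\<forall>H \<in> \<H>. wf_digraph H \<and> verts H \<noteq> {}"
    and "wf_digraph D"
  shows "SCC_deletion_solution \<H> D k X \<longleftrightarrow> hitting_solution (GPC_family \<H>) D k X"
proof -
  let ?G = "del_verts D X"
  have "arcs ?G \<subseteq> verts ?G \<times> verts ?G"
    unfolding del_verts_def induced_def by auto
  then have "(\<exists>C \<in> strong_components ?G. contains_subgraph (induced ?G C) H) \<longleftrightarrow>
      (\<exists>F \<in> GPC (lift H). contains_subgraph ?G F)" if "H \<in> \<H>" for H
    using assms(2) that strong_component_subgraph_iff_GPC_subgraph by blast
  then have "(\<exists>C \<in> strong_components ?G. \<exists>H \<in> \<H>. contains_subgraph (induced ?G C) H) \<longleftrightarrow>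
      (\<exists>F \<in> GPC_family \<H>. contains_subgraph ?G F)"
    unfolding GPC_family_def by blast
  then show ?thesis
    unfolding SCC_deletion_solution_def hitting_solution_def by blast
qed

end
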